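(* Let $f:\mathbb{R}^n\to\mathbb{R}$ be bounded above on bounded sets, $x\in\mathbb{R}^n$, $\epsilon>0$, and suppose $g_x$ is Lipschitz at $\epsilon$ (i.e. $\operatorname{lip}g_x(\epsilon)<\infty$). Then $\operatorname{calm}\bar f_\epsilon(x)\le\operatorname{lip}g_x(\epsilon)=\sup\{|y|:y\in\partial g_x(\epsilon)\}$.
   Context: $\bar f_\epsilon(x):=\sup\{f(x'):|x'-x|\le\epsilon\}$; $g_x(\epsilon):=\bar f_\epsilon(x)$ for $\epsilon\ge0$. $\operatorname{calm}F(\bar y):=\limsup_{y\to\bar y,\,y\ne\bar y}\frac{|F(y)-F(\bar y)|}{|y-\bar y|}$, $\operatorname{lip}F(\bar y):=\limsup_{y,y'\to\bar y,\,y\ne y'}\frac{|F(y)-F(y')|}{|y-y'|}$. $\partial$ denotes the general (limiting) subdifferential: $v\in\partial g(\bar y)$ if there are $y^\nu\to\bar y$, $v^\nu\to v$ with $g(y^\nu)\to g(\bar y)$ and $g(y)\ge g(y^\nu)+v^\nu(y-y^\nu)+o(|y-y^\nu|)$. *)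

theory Defs
  imports "HOL-Analysis.Analysis"
begin

definition fbar :: "('a::real_normed_vector \<Rightarrow> real) \<Rightarrow> real \<Rightarrow> 'a \<Rightarrow> real" where
  "fbar f e x = (SUP x'\<in>cball x e. f x')"

text \<open>g_x(eps) = fbar_eps(x); only its values for eps >= 0 (indeed near eps > 0) matter.\<close>
definition gfun :: "('a::real_normed_vector \<Rightarrow> real) \<Rightarrow> 'a \<Rightarrow> real \<Rightarrow> real" where
  "gfun f x = (\<lambda>e. fbar f e x)"

definition calm :: "('a::real_normed_vector \<Rightarrow> real) \<Rightarrow> 'a \<Rightarrow> ereal" where
  "calm F yb = Limsup (at yb) (\<lambda>y. ereal (\<bar>F y - F yb\<bar> / norm (y - yb)))"

definition lipm :: "('a::real_normed_vector \<Rightarrow> real) \<Rightarrow> 'a \<Rightarrow> ereal" where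
  "lipm F yb = Limsup (at (yb, yb) within {p. fst p \<noteq> snd p})
      (\<lambda>p. ereal (\<bar>F (fst p) - F (snd p)\<bar> / norm (fst p - snd p)))"

definition regular_subgrad :: "(real \<Rightarrow> real) \<Rightarrow> real \<Rightarrow> real \<Rightarrow> bool" where
  "regular_subgrad g v y0 \<longleftrightarrow>
     (\<forall>e>0. \<forall>\<^sub>F y in at y0. g y \<ge> g y0 + v * (y - y0) - e * \<bar>y - y0\<bar>)"

definition general_subdiff :: "(real \<Rightarrow> real) \<Rightarrow> real \<Rightarrow> real set" where
  "general_subdiff g yb = {v. \<exists>Y V. Y \<longlonglongrightarrow> yb \<and> V \<longlonglongrightarrow> v \<and>
      (\<lambda>k. g (Y k)) \<longlonglongrightarrow> g yb \<and> (\<forall>k. regular_subgrad g (V k) (Y k))}"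

end

theory Submission
  imports Defs
begin

(*
  Write G = g_x, so that G(e) = fbar_e(x).  The theorem splits into two independent facts.

  (1) calm fbar_e(x) <= lip G(e).  Moving the centre from x to y changes the ball by at most
      |y - x|, so fbar_e(y) is squeezed between G(e - |y - x|) and G(e + |y - x|); hence any
      local Lipschitz constant of G at e bounds the difference quotients of fbar_e at x.

  (2) lip G(e) = sup {|v| : v \<in> \<partial>G(e)} for EVERY real function G that is Lipschitz at e.
      "<=": a regular subgradient at a point where G is L-Lipschitz has modulus <= L, and this
      bound passes to limits.  ">=": if c < lip G(e) there are points s < t near e with
      |G t - G s| > c (t - s); a mean value inequality for regular subgradients (proved by
      minimising G - c t plus a quadratic penalty) yields regular subgradients v with |v| >= c
      at points converging to e, and a limit of these lies in \<partial>G(e).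
*)

text \<open>An extended real lies below \<open>a\<close> if it lies below every real number exceeding \<open>a\<close>;
  this turns bounds by real Lipschitz constants into bounds by the modulus.\<close>
lemma ereal_le_from_real_bounds:
  fixes a b :: ereal
  assumes "\<And>L. a < ereal L \<Longrightarrow> b \<le> ereal L"
  shows "b \<le> a"
proof (rule dense_ge)
  fix z assume "a < z"
  then show "b \<le> z" using assms by (cases z) auto
qed

section \<open>The Lipschitz modulus of a real function\<close>

lemma lipschitz_near_if_lipm_less:
  fixes G :: "real \<Rightarrow> real"
  assumes "lipm G e < ereal L"
  obtains \<delta> where "\<delta> > 0" and "L-lipschitz_on (ball e \<delta>) G"
proof -
  have "\<forall>\<^sub>F p in at (e, e) within {p. fst p \<noteq> snd p}.
      ereal (\<bar>G (fst p) - G (snd p)\<bar> / norm (fst p - snd p)) < ereal L"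
    using Limsup_lessD[OF assms[unfolded lipm_def]] by simp
  then obtain d where d: "d > 0" and near: "\<And>p. fst p \<noteq> snd p \<Longrightarrow> dist p (e, e) < d \<Longrightarrow>
       \<bar>G (fst p) - G (snd p)\<bar> / norm (fst p - snd p) < L"
    unfolding eventually_at by auto
  have quotient: "\<bar>G s - G t\<bar> < L * \<bar>s - t\<bar>"
    if "s \<noteq> t" "dist s e < d/2" "dist t e < d/2" for s t
  proof -
    have "dist (s, t) (e, e) \<le> dist s e + dist t e"
      unfolding dist_Pair_Pair by (rule sqrt_sum_squares_le_sum) simp_all
    then have "\<bar>G s - G t\<bar> / \<bar>s - t\<bar> < L" using near[of "(s, t)"] that by simp
    then show ?thesis using that(1) by (simp add: divide_less_eq mult.commute)
  qed
  have "0 \<le> \<bar>G e - G (e + d/4)\<bar>" by simp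
  also have "\<dots> < L * (d/4)" using quotient[of e "e + d/4"] d by (simp add: dist_real_def)
  finally have "0 \<le> L" using d by (simp add: zero_less_mult_iff)
  have "L-lipschitz_on (ball e (d/2)) G"
  proof (rule lipschitz_onI)
    fix s t assume "s \<in> ball e (d/2)" "t \<in> ball e (d/2)"
    then show "dist (G s) (G t) \<le> L * dist s t"
      using quotient[of s t]
      by (cases "s = t") (auto simp: dist_real_def dist_commute abs_minus_commute)
  qed fact
  then show thesis using d that[of "d/2"] by simp
qed

lemma steep_pair_if_lipm_greater:
  fixes G :: "real \<Rightarrow> real"
  assumes "ereal c < lipm G e" and "d > 0"
  shows "\<exists>s t. s < t \<and> s \<in> ball e d \<and> t \<in> ball e d \<and> c * (t - s) < \<bar>G t - G s\<bar>"
proof -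
  have "\<not> (\<forall>\<^sub>F p in at (e, e) within {p. fst p \<noteq> snd p}.
      ereal (\<bar>G (fst p) - G (snd p)\<bar> / norm (fst p - snd p)) \<le> ereal c)"
  proof
    assume "\<forall>\<^sub>F p in at (e, e) within {p. fst p \<noteq> snd p}.
      ereal (\<bar>G (fst p) - G (snd p)\<bar> / norm (fst p - snd p)) \<le> ereal c"
    then have "lipm G e \<le> ereal c" unfolding lipm_def by (rule Limsup_bounded)
    then show False using assms(1) by simp
  qed
  then obtain p where p: "fst p \<noteq> snd p" "dist p (e, e) < d"
    and steep: "c < \<bar>G (fst p) - G (snd p)\<bar> / \<bar>fst p - snd p\<bar>"
    using assms(2) unfolding eventually_at by (auto simp: not_le)
  have near: "fst p \<in> ball e d" "snd p \<in> ball e d"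
    using dist_fst_le[of p "(e, e)"] dist_snd_le[of p "(e, e)"] p(2) by (auto simp: dist_commute)
  have "c * \<bar>fst p - snd p\<bar> < \<bar>G (fst p) - G (snd p)\<bar>"
    using steep p(1) by (simp add: pos_less_divide_eq)
  then show ?thesis
  proof (cases "fst p < snd p")
    case True
    then show ?thesis using near \<open>c * _ < _\<close>
      by (intro exI[of _ "fst p"] exI[of _ "snd p"]) (simp add: abs_minus_commute)
  next
    case False
    then have "snd p < fst p" using p(1) by simp
    then show ?thesis using near \<open>c * _ < _\<close>
      by (intro exI[of _ "snd p"] exI[of _ "fst p"]) simp
  qed
qed

section \<open>Regular subgradients\<close>

text \<open>Where \<open>G\<close> is \<open>L\<close>-Lipschitz, every regular subgradient has modulus at most \<open>L\<close>:
  test the subgradient inequality at a nearby point on the side where \<open>v (s - y) > 0\<close>.\<close>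
lemma regular_subgrad_le_lipschitz:
  fixes G :: "real \<Rightarrow> real"
  assumes sg: "regular_subgrad G v y" and lip: "L-lipschitz_on U G" and "open U" "y \<in> U"
  shows "\<bar>v\<bar> \<le> L"
proof (rule ccontr)
  assume "\<not> \<bar>v\<bar> \<le> L"
  define \<eta> where "\<eta> = (\<bar>v\<bar> - L) / 2"
  have "\<eta> > 0" using \<open>\<not> \<bar>v\<bar> \<le> L\<close> by (simp add: \<eta>_def)
  then have "\<forall>\<^sub>F s in at y. G y + v * (s - y) - \<eta> * \<bar>s - y\<bar> \<le> G s"
    using sg unfolding regular_subgrad_def by blast
  then obtain d where "d > 0"
    and below: "\<And>s. s \<noteq> y \<Longrightarrow> dist s y < d \<Longrightarrow> G y + v * (s - y) - \<eta> * \<bar>s - y\<bar> \<le> G s"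
    unfolding eventually_at by auto
  obtain r where "r > 0" "ball y r \<subseteq> U" using \<open>open U\<close> \<open>y \<in> U\<close> open_contains_ball by blast
  define h where "h = min d r / 2"
  have h: "h > 0" "h < d" "h < r" using \<open>d > 0\<close> \<open>r > 0\<close> by (auto simp: h_def)
  define s where "s = y + (if v \<ge> 0 then h else - h)"
  have s: "\<bar>s - y\<bar> = h" "v * (s - y) = \<bar>v\<bar> * h" "s \<in> U"
    using h \<open>ball y r \<subseteq> U\<close> by (auto simp: s_def dist_real_def)
  have "G y + \<bar>v\<bar> * h - \<eta> * h \<le> G s" using below[of s] s h by (simp add: dist_real_def)
  moreover have "\<bar>G s - G y\<bar> \<le> L * h"
    using lipschitz_onD[OF lip s(3) \<open>y \<in> U\<close>] s by (simp add: dist_real_def)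
  ultimately have "(\<bar>v\<bar> - L) * h \<le> \<eta> * h" by (simp add: algebra_simps)
  then have "\<bar>v\<bar> - L \<le> \<eta>" using h(1) by simp
  then show False using \<open>\<eta> > 0\<close> by (simp add: \<eta>_def)
qed

text \<open>A quadratic minorant touching \<open>g\<close> at \<open>y\<close> with slope \<open>v\<close> makes \<open>v\<close> a regular
  (indeed proximal) subgradient, since \<open>K (z - y)\<^sup>2 = o(\<bar>z - y\<bar>)\<close>.\<close>
lemma regular_subgrad_if_quadratic_minorant:
  fixes g :: "real \<Rightarrow> real"
  assumes "\<forall>\<^sub>F z in at y. g y + v * (z - y) - K * (z - y)\<^sup>2 \<le> g z"
  shows "regular_subgrad g v y"
  unfolding regular_subgrad_def
proof (intro allI impI)
  fix e :: real assume "e > 0"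
  have "\<forall>\<^sub>F z in at y. K * (z - y)\<^sup>2 \<le> e * \<bar>z - y\<bar>"
    unfolding eventually_at
  proof (intro exI[of _ "e / (\<bar>K\<bar> + 1)"] conjI ballI impI)
    show "e / (\<bar>K\<bar> + 1) > 0" using \<open>e > 0\<close> by simp
    fix z assume "z \<in> UNIV" and "z \<noteq> y \<and> dist z y < e / (\<bar>K\<bar> + 1)"
    then have "(\<bar>K\<bar> + 1) * \<bar>z - y\<bar> < e"
      by (simp add: dist_real_def pos_less_divide_eq mult.commute)
    then have "\<bar>K\<bar> * \<bar>z - y\<bar> \<le> e" by (simp add: distrib_right)
    then have "\<bar>K\<bar> * \<bar>z - y\<bar> * \<bar>z - y\<bar> \<le> e * \<bar>z - y\<bar>" by (simp add: mult_right_mono)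
    moreover have "K * (z - y)\<^sup>2 \<le> \<bar>K\<bar> * (z - y)\<^sup>2" by (intro mult_right_mono) auto
    moreover have "(z - y)\<^sup>2 = \<bar>z - y\<bar> * \<bar>z - y\<bar>" by (simp add: power2_eq_square)
    ultimately show "K * (z - y)\<^sup>2 \<le> e * \<bar>z - y\<bar>" by (simp add: mult.assoc)
  qed
  with assms show "\<forall>\<^sub>F z in at y. g y + v * (z - y) - e * \<bar>z - y\<bar> \<le> g z"
    by eventually_elim linarith
qed

text \<open>Regular subgradients of the reflected function \<open>t \<mapsto> g (-t)\<close> are the negatives of
  those of \<open>g\<close>; this lets decreasing behaviour be treated like increasing behaviour.\<close>
lemma regular_subgrad_reflect:
  fixes g :: "real \<Rightarrow> real"
  assumes "regular_subgrad (\<lambda>t. g (- t)) w (- y)"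
  shows "regular_subgrad g (- w) y"
  unfolding regular_subgrad_def
proof (intro allI impI)
  fix e :: real assume "e > 0"
  with assms obtain d where "d > 0" and below:
    "\<And>z. z \<noteq> - y \<Longrightarrow> dist z (- y) < d \<Longrightarrow> g y + w * (z + y) - e * \<bar>z + y\<bar> \<le> g (- z)"
    unfolding regular_subgrad_def eventually_at by auto
  show "\<forall>\<^sub>F z in at y. g y + - w * (z - y) - e * \<bar>z - y\<bar> \<le> g z"
    unfolding eventually_at
  proof (intro exI[of _ d] conjI ballI impI)
    fix z assume "z \<in> UNIV" and "z \<noteq> y \<and> dist z y < d"
    then show "g y + - w * (z - y) - e * \<bar>z - y\<bar> \<le> g z"
      using below[of "- z"] by (auto simp: dist_real_def abs_minus_commute algebra_simps)
  qed fact
qed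

lemma sq_pos_part_upper:
  fixes u u0 :: real
  shows "(max 0 u)\<^sup>2 \<le> (max 0 u0)\<^sup>2 + 2 * max 0 u0 * (u - u0) + (u - u0)\<^sup>2"
proof (cases "u0 \<ge> 0")
  case True
  then show ?thesis by (cases "u \<ge> 0") (auto simp: power2_eq_square algebra_simps)
next
  case False
  then show ?thesis by (cases "u \<ge> 0") (auto simp: power2_eq_square intro: mult_mono)
qed

text \<open>We minimise
  \<open>\<phi> t = g t - c t + K (max 0 (p + \<eta> - t))\<^sup>2\<close> on \<open>[p, q]\<close>: the penalty keeps the minimiser
  away from \<open>p\<close>, the choice of \<open>\<eta>\<close> keeps it away from \<open>q\<close>, and at the interior minimiser the
  penalty supplies a quadratic minorant of \<open>g\<close>.\<close>
lemma regular_subgrad_mean_value: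
  fixes g :: "real \<Rightarrow> real"
  assumes "p < q" and cont: "continuous_on {p..q} g" and rise: "c * (q - p) < g q - g p"
  shows "\<exists>y v. y \<in> {p<..<q} \<and> c \<le> v \<and> regular_subgrad g v y"
proof -
  define \<psi> where "\<psi> t = g t - c * t" for t
  have cont_\<psi>: "continuous_on {p..q} \<psi>" unfolding \<psi>_def by (intro continuous_intros cont)
  have "\<psi> p < \<psi> q" using rise by (simp add: \<psi>_def algebra_simps)
  obtain d where "d > 0"
    and near_p: "\<And>t. t \<in> {p..q} \<Longrightarrow> dist t p < d \<Longrightarrow> dist (\<psi> t) (\<psi> p) < \<psi> q - \<psi> p"
    using cont_\<psi>[unfolded continuous_on_iff, rule_format, of p "\<psi> q - \<psi> p"]
      \<open>\<psi> p < \<psi> q\<close> \<open>p < q\<close> by auto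
  define \<eta> where "\<eta> = min d (q - p) / 2"
  have \<eta>: "\<eta> > 0" "\<eta> < d" "\<eta> < q - p" using \<open>d > 0\<close> \<open>p < q\<close> by (auto simp: \<eta>_def)
  have "\<psi> (p + \<eta>) < \<psi> q" using near_p[of "p + \<eta>"] \<eta> by (auto simp: dist_real_def)
  define K where "K = (\<bar>\<psi> (p + \<eta>) - \<psi> p\<bar> + 1) / \<eta>\<^sup>2"
  have "K > 0" and K_big: "\<psi> (p + \<eta>) - \<psi> p < K * \<eta>\<^sup>2" using \<eta> by (simp_all add: K_def)
  define Q where "Q t = (max 0 (p + \<eta> - t))\<^sup>2" for t
  define \<phi> where "\<phi> t = \<psi> t + K * Q t" for t
  have "continuous_on {p..q} \<phi>" unfolding \<phi>_def Q_def by (intro continuous_intros cont_\<psi>)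
  obtain y where "y \<in> {p..q}" and min: "\<And>t. t \<in> {p..q} \<Longrightarrow> \<phi> y \<le> \<phi> t"
    using continuous_attains_inf[OF compact_Icc _ \<open>continuous_on {p..q} \<phi>\<close>] \<open>p < q\<close> by auto
  have "\<phi> y \<le> \<psi> (p + \<eta>)" using min[of "p + \<eta>"] \<eta> by (simp add: \<phi>_def Q_def)
  moreover have "\<phi> q = \<psi> q" and "\<phi> p = \<psi> p + K * \<eta>\<^sup>2" using \<eta> by (simp_all add: \<phi>_def Q_def)
  ultimately have "y \<noteq> q" and "y \<noteq> p" using \<open>\<psi> (p + \<eta>) < \<psi> q\<close> K_big by auto
  with \<open>y \<in> {p..q}\<close> have y: "y \<in> {p<..<q}" by auto
  define v where "v = c + 2 * K * max 0 (p + \<eta> - y)"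
  have "\<forall>\<^sub>F z in at y. z \<in> {p<..<q}" using y by (intro eventually_at_in_open') auto
  then have "\<forall>\<^sub>F z in at y. g y + v * (z - y) - K * (z - y)\<^sup>2 \<le> g z"
  proof eventually_elim
    case (elim z)
    have "\<phi> y \<le> \<phi> z" using min elim by auto
    moreover have "Q z \<le> Q y - 2 * max 0 (p + \<eta> - y) * (z - y) + (z - y)\<^sup>2"
      using sq_pos_part_upper[of "p + \<eta> - z" "p + \<eta> - y"]
      by (simp add: Q_def algebra_simps power2_eq_square)
    then have "K * Q z \<le> K * (Q y - 2 * max 0 (p + \<eta> - y) * (z - y) + (z - y)\<^sup>2)"
      using \<open>K > 0\<close> by (intro mult_left_mono) auto
    ultimately show ?case by (simp add: \<phi>_def \<psi>_def v_def algebra_simps)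
  qed
  then have "regular_subgrad g v y" by (rule regular_subgrad_if_quadratic_minorant)
  moreover have "c \<le> v" using \<open>K > 0\<close> by (simp add: v_def)
  ultimately show ?thesis using y by blast
qed

text \<open>Two-sided version: a steep chord in either direction yields a regular subgradient of
  modulus at least \<open>c\<close>; the decreasing case reduces to the increasing one by reflection.\<close>
lemma regular_subgrad_mean_value_abs:
  fixes g :: "real \<Rightarrow> real"
  assumes "p < q" and cont: "continuous_on {p..q} g" and steep: "c * (q - p) < \<bar>g q - g p\<bar>"
  shows "\<exists>y v. y \<in> {p<..<q} \<and> c \<le> \<bar>v\<bar> \<and> regular_subgrad g v y"
proof (cases "c * (q - p) < g q - g p")
  case True
  then obtain y v where "y \<in> {p<..<q}" "c \<le> v" "regular_subgrad g v y"
    using regular_subgrad_mean_value[OF \<open>p < q\<close> cont] by blast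
  then show ?thesis by (intro exI[of _ y] exI[of _ v]) auto
next
  case False
  then have fall: "c * (- p - (- q)) < g (- (- p)) - g (- (- q))" using steep by (auto simp: abs_if split: if_splits)
  have "continuous_on {- q..- p} (\<lambda>t. g (- t))"
    by (rule continuous_on_compose2[OF cont continuous_on_minus[OF continuous_on_id]]) auto
  then obtain y w where y: "y \<in> {- q<..<- p}" and "c \<le> w"
    and "regular_subgrad (\<lambda>t. g (- t)) w (- (- y))"
    using regular_subgrad_mean_value[of "- q" "- p" "\<lambda>t. g (- t)" c] fall \<open>p < q\<close> by auto
  then have "regular_subgrad g (- w) (- y)" using regular_subgrad_reflect by blast
  then show ?thesis using y \<open>c \<le> w\<close> by (intro exI[of _ "- y"] exI[of _ "- w"]) auto
qed

section \<open>The limiting subdifferential and the Lipschitz modulus\<close>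

lemma general_subdiff_le_lipschitz:
  fixes G :: "real \<Rightarrow> real"
  assumes lip: "L-lipschitz_on (ball e \<delta>) G" and "\<delta> > 0" and "v \<in> general_subdiff G e"
  shows "\<bar>v\<bar> \<le> L"
proof -
  obtain Y V where Y: "Y \<longlonglongrightarrow> e" and V: "V \<longlonglongrightarrow> v"
    and sg: "\<And>k. regular_subgrad G (V k) (Y k)"
    using assms(3) unfolding general_subdiff_def by blast
  have "\<forall>\<^sub>F k in sequentially. Y k \<in> ball e \<delta>"
    using topological_tendstoD[OF Y open_ball] \<open>\<delta> > 0\<close> by simp
  then have "\<forall>\<^sub>F k in sequentially. \<bar>V k\<bar> \<le> L"
    by eventually_elim (rule regular_subgrad_le_lipschitz[OF sg lip open_ball])
  then show ?thesis
    by (rule tendsto_le[OF trivial_limit_sequentially tendsto_const tendsto_rabs[OF V]])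
qed

lemma general_subdiff_from_approximations:
  fixes G :: "real \<Rightarrow> real"
  assumes "isCont G e"
    and approx: "\<And>k. \<exists>y v. \<bar>y - e\<bar> < inverse (Suc k) \<and> c \<le> \<bar>v\<bar> \<and> \<bar>v\<bar> \<le> L
      \<and> regular_subgrad G v y"
  shows "\<exists>v \<in> general_subdiff G e. c \<le> \<bar>v\<bar>"
proof -
  obtain Y V where YV: "\<And>k. \<bar>Y k - e\<bar> < inverse (Suc k) \<and> c \<le> \<bar>V k\<bar> \<and> \<bar>V k\<bar> \<le> L
      \<and> regular_subgrad G (V k) (Y k)"
    using approx by metis
  have "Y \<longlonglongrightarrow> e"
  proof (rule LIM_zero_cancel, rule Lim_null_comparison)
    show "\<forall>\<^sub>F k in sequentially. norm (Y k - e) \<le> inverse (Suc k)"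
      using YV by (simp add: less_imp_le)
  qed (rule LIMSEQ_inverse_real_of_nat)
  have "\<forall>k. V k \<in> cball 0 L" using YV by simp
  then obtain v r where r: "strict_mono r" and Vr: "(V \<circ> r) \<longlonglongrightarrow> v"
    using compact_imp_seq_compact[OF compact_cball] unfolding seq_compact_def by metis
  have Yr: "(Y \<circ> r) \<longlonglongrightarrow> e" by (rule LIMSEQ_subseq_LIMSEQ[OF \<open>Y \<longlonglongrightarrow> e\<close> r])
  have "(\<lambda>k. G ((Y \<circ> r) k)) \<longlonglongrightarrow> G e" by (rule isCont_tendsto_compose[OF assms(1) Yr])
  then have "v \<in> general_subdiff G e"
    unfolding general_subdiff_def using Yr Vr YV
    by (intro CollectI exI[of _ "Y \<circ> r"] exI[of _ "V \<circ> r"]) auto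
  moreover have "c \<le> \<bar>v\<bar>"
    using YV by (intro tendsto_le[OF trivial_limit_sequentially tendsto_rabs[OF Vr] tendsto_const])
      (simp add: always_eventually)
  ultimately show ?thesis by blast
qed

text \<open>Conversely, a finite modulus above \<open>c\<close> forces a limiting subgradient of modulus
  \<open>\<ge> c\<close>: steep chords near \<open>e\<close> give regular subgradients by the mean value inequality.\<close>
lemma general_subdiff_exceeds:
  fixes G :: "real \<Rightarrow> real"
  assumes "lipm G e < \<infinity>" and "ereal c < lipm G e"
  shows "\<exists>v \<in> general_subdiff G e. c \<le> \<bar>v\<bar>"
proof -
  obtain L where "lipm G e < ereal L" using ereal_dense2[OF assms(1)] by blast
  then obtain \<delta> where "\<delta> > 0" and lip: "L-lipschitz_on (ball e \<delta>) G"
    by (rule lipschitz_near_if_lipm_less)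
  have cont: "continuous_on (ball e \<delta>) G" by (rule lipschitz_on_continuous_on[OF lip])
  then have "isCont G e" using \<open>\<delta> > 0\<close> by (simp add: continuous_on_eq_continuous_at)
  moreover have "\<exists>y v. \<bar>y - e\<bar> < inverse (Suc k) \<and> c \<le> \<bar>v\<bar> \<and> \<bar>v\<bar> \<le> L
      \<and> regular_subgrad G v y" for k
  proof -
    define d where "d = min (inverse (Suc k)) \<delta>"
    have "d > 0" using \<open>\<delta> > 0\<close> by (simp add: d_def)
    then obtain s t where "s < t" "s \<in> ball e d" "t \<in> ball e d" "c * (t - s) < \<bar>G t - G s\<bar>"
      using steep_pair_if_lipm_greater[OF assms(2)] by blast
    then have chord: "{s..t} \<subseteq> ball e d" by (auto simp: dist_real_def)
    then have "continuous_on {s..t} G"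
      by (rule continuous_on_subset[OF cont order_trans]) (simp add: d_def subset_ball)
    then obtain y v where "y \<in> {s<..<t}" "c \<le> \<bar>v\<bar>" and sg: "regular_subgrad G v y"
      using regular_subgrad_mean_value_abs[OF \<open>s < t\<close>] \<open>c * (t - s) < _\<close> by blast
    then have "y \<in> ball e d" using chord by (meson greaterThanLessThan_subseteq_atLeastAtMost_iff
        order_refl subsetD)
    then have "y \<in> ball e \<delta>" and "\<bar>y - e\<bar> < inverse (Suc k)"
      by (auto simp: d_def dist_real_def)
    then have "\<bar>v\<bar> \<le> L" by (intro regular_subgrad_le_lipschitz[OF sg lip open_ball])
    then show ?thesis using \<open>\<bar>y - e\<bar> < _\<close> \<open>c \<le> \<bar>v\<bar>\<close> sg by blast
  qed
  ultimately show ?thesis by (rule general_subdiff_from_approximations)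
qed

theorem lipm_eq_Sup_general_subdiff:
  fixes G :: "real \<Rightarrow> real"
  assumes "lipm G e < \<infinity>"
  shows "lipm G e = Sup ((\<lambda>v. ereal \<bar>v\<bar>) ` general_subdiff G e)"
proof (rule antisym)
  show "lipm G e \<le> Sup ((\<lambda>v. ereal \<bar>v\<bar>) ` general_subdiff G e)"
  proof (rule dense_le)
    fix a assume "a < lipm G e"
    then show "a \<le> Sup ((\<lambda>v. ereal \<bar>v\<bar>) ` general_subdiff G e)"
    proof (cases a)
      case (real c)
      then obtain v where "v \<in> general_subdiff G e" "c \<le> \<bar>v\<bar>"
        using general_subdiff_exceeds[OF assms] \<open>a < lipm G e\<close> by blast
      then show ?thesis using real by (intro Sup_upper2[of "ereal \<bar>v\<bar>"]) auto
    qed auto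
  qed
  show "Sup ((\<lambda>v. ereal \<bar>v\<bar>) ` general_subdiff G e) \<le> lipm G e"
  proof (rule Sup_least, clarify)
    fix v assume "v \<in> general_subdiff G e"
    show "ereal \<bar>v\<bar> \<le> lipm G e"
    proof (rule ereal_le_from_real_bounds)
      fix L assume "lipm G e < ereal L"
      then obtain \<delta> where "\<delta> > 0" "L-lipschitz_on (ball e \<delta>) G"
        by (rule lipschitz_near_if_lipm_less)
      then show "ereal \<bar>v\<bar> \<le> ereal L"
        using general_subdiff_le_lipschitz \<open>v \<in> general_subdiff G e\<close> by simp
    qed
  qed
qed

section \<open>Calmness of the sup-envelope\<close>

text \<open>Shifting the centre of the ball from \<open>x\<close> to \<open>y\<close> changes it by at most \<open>dist y x\<close>,
  so the envelope at \<open>y\<close> is squeezed between values of \<open>g\<^sub>x\<close> at \<open>e \<plusminus> dist y x\<close>.\<close>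
lemma fbar_sandwich:
  fixes f :: "'a::real_normed_vector \<Rightarrow> real"
  assumes bd: "\<And>S. bounded S \<Longrightarrow> bdd_above (f ` S)" and "dist y x \<le> e"
  shows "gfun f x (e - dist y x) \<le> fbar f e y" and "fbar f e y \<le> gfun f x (e + dist y x)"
proof -
  show "gfun f x (e - dist y x) \<le> fbar f e y"
    unfolding gfun_def fbar_def
  proof (rule cSUP_subset_mono)
    show "cball x (e - dist y x) \<subseteq> cball y e"
    proof
      fix z assume "z \<in> cball x (e - dist y x)"
      then show "z \<in> cball y e" using dist_triangle[of y z x] by simp
    qed
  qed (use assms in auto)
  show "fbar f e y \<le> gfun f x (e + dist y x)"
    unfolding gfun_def fbar_def
  proof (rule cSUP_subset_mono)
    show "cball y e \<subseteq> cball x (e + dist y x)"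
    proof
      fix z assume "z \<in> cball y e"
      then show "z \<in> cball x (e + dist y x)"
        using dist_triangle[of x z y] by (simp add: dist_commute[of x y])
    qed
    have "0 \<le> e" using assms(2) zero_le_dist[of y x] by linarith
    then show "cball y e \<noteq> {}" by simp
  qed (use assms in auto)
qed

lemma calm_fbar_le_lipschitz:
  fixes f :: "'a::real_normed_vector \<Rightarrow> real"
  assumes bd: "\<And>S. bounded S \<Longrightarrow> bdd_above (f ` S)" and "0 < \<epsilon>" and "0 < \<delta>"
    and lip: "L-lipschitz_on (ball \<epsilon> \<delta>) (gfun f x)"
  shows "calm (fbar f \<epsilon>) x \<le> ereal L"
  unfolding calm_def
proof (rule Limsup_bounded, unfold eventually_at, intro exI[of _ "min \<delta> \<epsilon>"] conjI ballI impI)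
  show "0 < min \<delta> \<epsilon>" using assms(2,3) by simp
  fix y assume "y \<in> UNIV" and "y \<noteq> x \<and> dist y x < min \<delta> \<epsilon>"
  then have t: "0 < dist y x" "dist y x < \<delta>" "dist y x < \<epsilon>" by auto
  let ?t = "dist y x" and ?G = "gfun f x"
  have "\<bar>?G (\<epsilon> + ?t) - ?G \<epsilon>\<bar> \<le> L * ?t" "\<bar>?G (\<epsilon> - ?t) - ?G \<epsilon>\<bar> \<le> L * ?t"
    using lipschitz_onD[OF lip, of "\<epsilon> + ?t" \<epsilon>] lipschitz_onD[OF lip, of "\<epsilon> - ?t" \<epsilon>] t
    by (simp_all add: dist_real_def)
  moreover have "fbar f \<epsilon> x = ?G \<epsilon>" by (simp add: gfun_def)
  ultimately have "\<bar>fbar f \<epsilon> y - fbar f \<epsilon> x\<bar> \<le> L * ?t"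
    using fbar_sandwich[OF bd, of y x \<epsilon>] t by (simp add: abs_le_iff)
  then show "ereal (\<bar>fbar f \<epsilon> y - fbar f \<epsilon> x\<bar> / norm (y - x)) \<le> ereal L"
    using t by (simp add: dist_norm divide_le_eq mult.commute)
qed

theorem corollary3p4:
  fixes f :: "'a::euclidean_space \<Rightarrow> real" and x :: 'a and \<epsilon> :: real
  assumes "\<And>S. bounded S \<Longrightarrow> bdd_above (f ` S)"
    and "\<epsilon> > 0"
    and "lipm (gfun f x) \<epsilon> < \<infinity>"
  shows "calm (fbar f \<epsilon>) x \<le> lipm (gfun f x) \<epsilon>
    \<and> lipm (gfun f x) \<epsilon> = Sup ((\<lambda>y. ereal \<bar>y\<bar>) ` general_subdiff (gfun f x) \<epsilon>)"
proof
  show "calm (fbar f \<epsilon>) x \<le> lipm (gfun f x) \<epsilon>"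
  proof (rule ereal_le_from_real_bounds)
    fix L assume "lipm (gfun f x) \<epsilon> < ereal L"
    then obtain \<delta> where "\<delta> > 0" "L-lipschitz_on (ball \<epsilon> \<delta>) (gfun f x)"
      by (rule lipschitz_near_if_lipm_less)
    then show "calm (fbar f \<epsilon>) x \<le> ereal L" using calm_fbar_le_lipschitz assms(1,2) by blast
  qed
  show "lipm (gfun f x) \<epsilon> = Sup ((\<lambda>y. ereal \<bar>y\<bar>) ` general_subdiff (gfun f x) \<epsilon>)"
    by (rule lipm_eq_Sup_general_subdiff[OF assms(3)])
qed

end
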